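(* Consider the iterates of AS-ALM and fix $k\ge0$ with $\eta_k\in(0,1/\nu)$. Then $\tilde w^k\in\Omega$ and for all $w=(x;\lambda)\in\Omega$, $$f(x)-f(x^{k+1})+\langle w-\tilde w^k,\mathcal J(w)\rangle\ge(w-\tilde w^k)^\top Q_k(w^k-\tilde w^k)+\zeta^k(x),\qquad Q_k=\begin{bmatrix}\mathcal D_k&0\\0&\frac1\beta I\end{bmatrix}.$$
   Context: Setting. $\mathcal X\subset\mathbb R^{n_1}$ is a nonempty closed convex set; $A\in\mathbb R^{n\times n_1}$, $b\in\mathbb R^n$; $f=\frac1N\sum_{j=1}^Nf_j$, each $f_j$ real-valued, convex and continuously differentiable on an open set containing $\mathcal X$. The problem is $\min\{f(x):Ax=b,\ x\in\mathcal X\}$. A fixed symmetric positive definite $H$ and a constant $\nu>0$ satisfy $\|\nabla f_j(x_1)-\nabla f_j(x_2)\|_{H^{-1}}\le\nu\|x_1-x_2\|_H$ for all $x_1,x_2\in\mathcal X$ and all $j$. For symmetric $G$, $\|v\|_G^2:=v^\top Gv$; $G_1\succeq G_2$ means $G_1-G_2$ is positive semidefinite. Subroutine xsub. Inputs: $x^k\in\mathcal X$, $\breve x^k$, $h\in\mathbb R^{n_1}$, an integer $m_k\ge1$, $\eta_k>0$, a symmetric matrix $M_k$. Set $x_1=x^k$, $\breve x_1=\breve x^k$. For $t=1,\dots,m_k$: draw $\xi_t$ uniformly from $\{1,\dots,N\}$, independently of everything generated before; set $\beta_t=2/(t+1)$, $\gamma_t=2/(t\eta_k)$, $\hat x_t=\beta_t\breve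 x_t+(1-\beta_t)x_t$, $d_t=\nabla f_{\xi_t}(\hat x_t)+e_t$ where $e_t$ is a random vector whose conditional expectation given all previously generated random quantities and $\xi_t$ is $0$; $\breve x_{t+1}=\arg\min_{x\in\mathcal X}\{\langle d_t+h,x\rangle+\frac{\gamma_t}2\|x-\breve x_t\|_H^2+\frac12\|x-x^k\|_{M_k}^2\}$; $x_{t+1}=\beta_t\breve x_{t+1}+(1-\beta_t)x_t$. Output $x^{k+1}=x_{m_k+1}$, $\breve x^{k+1}=\breve x_{m_k+1}$. Put $\delta_t=\nabla f(\hat x_t)-d_t$ (inner quantities of outer iteration $k$), and for $x\in\mathcal X$ $$\zeta^k(x)=\frac{2}{m_k(m_k+1)}\Big[\frac1{\eta_k}\big(\|x-\breve x^{k+1}\|_H^2-\|x-\breve x^k\|_H^2\big)-\sum_{t=1}^{m_k}t\langle\delta_t,\breve x_t-x\rangle-\frac{\eta_k}{4(1-\eta_k\nu)}\sum_{t=1}^{m_k}t^2\|\delta_t\|_{H^{-1}}^2\Big].$$ Algorithm AS-ALM. Parameters: $\beta>0$, $s\in(0,2]$, the matrix $H$. Start: $(x^0,\lambda^0)\in\mathcal X\times\mathbb R^n$, $\breve x^0=x^0$. For $k=0,1,\dots$: choose an integer $m_k\ge1$, $\eta_k>0$ and a symmetric $M_k$ with $\mathcal D_k:=M_k-\beta A^\top A\succeq0$; set $h^k=-A^\top[\lambda^k-\beta(Ax^k-b)]$; compute $(x^{k+1},\breve x^{k+1})$ by xsub with inputs $x^k,\breve x^k,h^k,m_k,\eta_k,M_k$;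 $\lambda^{k+1}=\lambda^k-s\beta(Ax^{k+1}-b)$. Notation. $\Omega=\mathcal X\times\mathbb R^n$; $w=(x;\lambda)$; $\mathcal J(w)=(-A^\top\lambda;\,Ax-b)$; $w^k=(x^k;\lambda^k)$; $\tilde\lambda^k=\lambda^k-\beta(Ax^{k+1}-b)$; $\tilde w^k=(x^{k+1};\tilde\lambda^k)$. *)

theory Defs
  imports "HOL-Analysis.Analysis"
begin

text \<open>Squared weighted norm: qf G v = v^T G v = (norm_G v)^2.\<close>
definition qf :: "real^'n^'n \<Rightarrow> real^'n \<Rightarrow> real" where
  "qf G v = v \<bullet> (G *v v)"

definition psd :: "real^'n^'n \<Rightarrow> bool" where
  "psd G \<longleftrightarrow> (\<forall>v. 0 \<le> qf G v)"

definition sym_pd :: "real^'n^'n \<Rightarrow> bool" where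
  "sym_pd G \<longleftrightarrow> transpose G = G \<and> (\<forall>v. v \<noteq> 0 \<longrightarrow> 0 < qf G v)"

definition favg :: "nat \<Rightarrow> (nat \<Rightarrow> 'a \<Rightarrow> real) \<Rightarrow> 'a \<Rightarrow> real" where
  "favg N f x = (\<Sum>j=1..N. f j x) / real N"

definition gavg :: "nat \<Rightarrow> (nat \<Rightarrow> 'a \<Rightarrow> 'a::real_vector) \<Rightarrow> 'a \<Rightarrow> 'a" where
  "gavg N g x = (1 / real N) *\<^sub>R (\<Sum>j=1..N. g j x)"

end

theory Submission
  imports Defs
begin

text \<open>The inner loop of xsub is an accelerated gradient method, with inexact gradients
  \<open>d\<^sub>t\<close>, for the proximal subproblem of minimising \<open>\<Phi> = F + \<langle>h, _\<rangle> + 1/2 \<parallel>_ - x\<^sup>k\<parallel>\<^sub>M\<^sup>2\<close>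
  over \<open>X\<close>. Put \<open>\<Psi>\<^sub>t(z) = \<Phi>(x\<^sub>t) - \<Phi>(z) + 1/2 \<parallel>z - x\<^sub>t\<parallel>\<^sub>M\<^sup>2\<close>. The descent lemma at the
  new iterate, the gradient inequality at \<open>x\<^sub>t\<close> and at \<open>z\<close>, and the three-point property
  of the proximal update give \<open>\<Psi>\<^sub>t\<^sub>+\<^sub>1 \<le> (1 - 2/(t+1)) \<Psi>\<^sub>t\<close> plus error terms. The gradient
  error \<open>\<delta>\<^sub>t\<close> is absorbed by Young's inequality against the surplus \<open>\<gamma>\<^sub>t - \<nu> \<beta>\<^sub>t\<close> of the
  proximal weight over the smoothness constant, which is positive because \<open>\<eta>\<^sub>k \<nu> < 1\<close>.
  Multiplied by \<open>t(t+1)/2\<close> the recursion telescopes to \<open>\<Psi>\<^sub>m\<^sub>+\<^sub>1(z) \<le> - \<zeta>\<^sup>k(z)\<close>. Since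
  \<open>h\<^sup>k\<close> is built from the multiplier \<open>\<lambda>\<^sup>k - \<beta>(Ax\<^sup>k - b)\<close>, the linear and proximal parts of
  \<open>\<Psi>\<^sub>m\<^sub>+\<^sub>1\<close> rearrange exactly into the variational inequality with \<open>Q\<^sub>k\<close>.\<close>

lemma inner_matrix_sym:
  "transpose G = G \<Longrightarrow> v \<bullet> ((G::real^'n^'n) *v u) = u \<bullet> (G *v v)"
  by (metis dot_lmul_matrix inner_commute transpose_matrix_vector)

lemma inner_vector_matrix: "u \<bullet> (y v* (A::real^'n^'m)) = (A *v u) \<bullet> y"
  by (metis dot_lmul_matrix inner_commute)

lemma qf_add:
  "transpose G = G \<Longrightarrow> qf G (u + v) = qf G u + 2 * (u \<bullet> (G *v v)) + qf G v"
  unfolding qf_def using inner_matrix_sym[of G u v]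
  by (simp add: inner_add_left inner_add_right matrix_vector_right_distrib algebra_simps)

lemma qf_scaleR: "qf G (c *\<^sub>R v) = c^2 * qf G v"
  unfolding qf_def by (simp add: matrix_vector_mult_scaleR power2_eq_square)

lemma qf_uminus: "qf G (- v) = qf G v"
  using qf_scaleR[of G "-1" v] by simp

lemma qf_diff:
  "transpose G = G \<Longrightarrow> qf G (u - v) = qf G u - 2 * (u \<bullet> (G *v v)) + qf G v"
  using qf_add[of G u "-v"] qf_scaleR[of G "-1" v]
  by (simp add: matrix_vector_mult_scaleR[of G "-1", simplified])

lemma qf_add_scaleR:
  "transpose G = G \<Longrightarrow>
    qf G (p + c *\<^sub>R r) = (1 - c) * qf G p + c * qf G (p + r) - c * (1 - c) * qf G r"
  by (simp add: qf_add qf_scaleR matrix_vector_mult_scaleR algebra_simps power2_eq_square)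

lemma qf_nonneg_if_sym_pd: "sym_pd H \<Longrightarrow> 0 \<le> qf H v"
  unfolding sym_pd_def by (cases "v = 0") (auto simp: qf_def intro: less_imp_le)

lemma psd_if_psd_diff_gram:
  fixes A :: "real^'n^'m"
  assumes "psd (M - \<beta> *\<^sub>R (transpose A ** A))" and "0 \<le> \<beta>"
  shows "psd M"
  unfolding psd_def
proof
  fix v
  have "qf M v = qf (M - \<beta> *\<^sub>R (transpose A ** A)) v + \<beta> * ((A *v v) \<bullet> (A *v v))"
    unfolding qf_def
    by (simp add: matrix_vector_mult_diff_rdistrib scaleR_matrix_vector_assoc[symmetric]
        matrix_vector_mul_assoc[symmetric] inner_diff_right inner_vector_matrix)
  then show "0 \<le> qf M v" using assms unfolding psd_def by simp
qed

lemma sym_pd_mult_matrix_inv: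
  assumes "sym_pd H" shows "H *v (matrix_inv H *v u) = u"
proof -
  have "\<forall>x. H *v x = 0 \<longrightarrow> x = 0" using assms unfolding sym_pd_def qf_def
    by (metis inner_zero_right less_irrefl)
  then have "invertible H" using matrix_left_invertible_ker invertible_left_inverse by blast
  then have "H ** matrix_inv H = mat 1"
    unfolding matrix_inv_def invertible_def by (rule someI2_ex) simp
  then show ?thesis by (metis matrix_vector_mul_assoc matrix_vector_mul_lid)
qed

lemma qf_matrix_inv:
  assumes "sym_pd H" shows "qf (matrix_inv H) u = qf H (matrix_inv H *v u)"
  unfolding qf_def sym_pd_mult_matrix_inv[OF assms] by (simp add: inner_commute)

lemma qf_matrix_inv_nonneg: "sym_pd H \<Longrightarrow> 0 \<le> qf (matrix_inv H) u"
  by (simp add: qf_matrix_inv qf_nonneg_if_sym_pd)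

lemma inner_le_qf_matrix_inv_qf:
  assumes H: "sym_pd H" and c: "c > 0"
  shows "u \<bullet> v \<le> qf (matrix_inv H) u / (2 * c) + c / 2 * qf H v"
proof -
  define w where "w = matrix_inv H *v u"
  have Hw: "H *v w = u" unfolding w_def by (rule sym_pd_mult_matrix_inv[OF H])
  have sym: "transpose H = H" using H sym_pd_def by blast
  have "0 \<le> qf H (w - c *\<^sub>R v)" by (rule qf_nonneg_if_sym_pd[OF H])
  also have "\<dots> = qf H w - 2 * (w \<bullet> (H *v (c *\<^sub>R v))) + qf H (c *\<^sub>R v)"
    by (rule qf_diff[OF sym])
  also have "qf H w = qf (matrix_inv H) u"
    unfolding w_def qf_matrix_inv[OF H] ..
  also have "w \<bullet> (H *v (c *\<^sub>R v)) = c * (u \<bullet> v)"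
    using inner_matrix_sym[OF sym, of w v] Hw by (simp add: matrix_vector_mult_scaleR inner_commute)
  finally have "2 * c * (u \<bullet> v) \<le> qf (matrix_inv H) u + c^2 * qf H v"
    by (simp add: qf_scaleR)
  then show ?thesis using c by (simp add: field_simps power2_eq_square)
qed

lemma le_square_if_sqrt_le_mult_sqrt:
  fixes a b c :: real
  assumes "0 \<le> a" "0 \<le> b" "sqrt a \<le> c * sqrt b"
  shows "a \<le> c^2 * b"
proof -
  have "(sqrt a)^2 \<le> (c * sqrt b)^2"
    using assms by (intro power_mono) auto
  then show ?thesis using assms by (simp add: power_mult_distrib)
qed

lemma has_real_derivative_along_line:
  fixes F :: "'a::real_inner \<Rightarrow> real"
  assumes "(F has_derivative (\<lambda>h. h \<bullet> D)) (at (x + s *\<^sub>R v))"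
  shows "((\<lambda>t. F (x + t *\<^sub>R v)) has_real_derivative (v \<bullet> D)) (at s)"
proof -
  have "((\<lambda>t. x + t *\<^sub>R v) has_derivative (\<lambda>h. h *\<^sub>R v)) (at s)"
    by (auto intro!: derivative_eq_intros)
  from has_derivative_compose[OF this assms]
  have "((\<lambda>t. F (x + t *\<^sub>R v)) has_derivative (\<lambda>h. (h *\<^sub>R v) \<bullet> D)) (at s)" .
  moreover have "(\<lambda>h. (h *\<^sub>R v) \<bullet> D) = (*) (v \<bullet> D)" by (auto simp: fun_eq_iff)
  ultimately show ?thesis unfolding has_field_derivative_def by simp
qed

lemma convex_on_gradient_ineq:
  fixes F :: "'a::real_inner \<Rightarrow> real"
  assumes cv: "convex_on X F" and x: "x \<in> X" and y: "y \<in> X"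
    and d: "(F has_derivative (\<lambda>h. h \<bullet> G)) (at x)"
  shows "F x + G \<bullet> (y - x) \<le> F y"
proof -
  define v where "v = y - x"
  have "((\<lambda>t. F (x + t *\<^sub>R v)) has_real_derivative (v \<bullet> G)) (at 0)"
    using has_real_derivative_along_line[of F G x 0 v] d by simp
  then have "((\<lambda>h. (F (x + h *\<^sub>R v) - F x) / h) \<longlongrightarrow> v \<bullet> G) (at_right 0)"
    unfolding DERIV_def by (auto intro: tendsto_mono[OF at_le])
  moreover have "eventually (\<lambda>h. (F (x + h *\<^sub>R v) - F x) / h \<le> F y - F x) (at_right 0)"
    using eventually_at_right_real[OF zero_less_one]
  proof (rule eventually_mono)
    fix h :: real assume h: "h \<in> {0<..<1}"
    have "x + h *\<^sub>R v = (1 - h) *\<^sub>R x + h *\<^sub>R y" by (simp add: v_def algebra_simps)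
    then have "F (x + h *\<^sub>R v) \<le> (1 - h) * F x + h * F y"
      using convex_onD[OF cv, of h x y] h x y by simp
    then have "F (x + h *\<^sub>R v) - F x \<le> h * (F y - F x)" by (simp add: algebra_simps)
    then show "(F (x + h *\<^sub>R v) - F x) / h \<le> F y - F x"
      using h by (simp add: divide_le_eq mult.commute)
  qed
  ultimately have "v \<bullet> G \<le> F y - F x"
    using tendsto_le[OF trivial_limit_at_right_real tendsto_const] by blast
  then show ?thesis by (simp add: v_def inner_commute)
qed

lemma descent_lemma:
  fixes F :: "real^'n \<Rightarrow> real"
  assumes X: "convex X" and x: "x \<in> X" and y: "y \<in> X" and H: "sym_pd H" and nu: "\<nu> > 0"
    and d: "\<And>p. p \<in> X \<Longrightarrow> (F has_derivative (\<lambda>h. h \<bullet> G p)) (at p)"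
    and L: "\<And>p q. p \<in> X \<Longrightarrow> q \<in> X \<Longrightarrow> qf (matrix_inv H) (G p - G q) \<le> \<nu>^2 * qf H (p - q)"
  shows "F y \<le> F x + G x \<bullet> (y - x) + \<nu> / 2 * qf H (y - x)"
proof -
  define v where "v = y - x"
  define \<phi> where "\<phi> s = F (x + s *\<^sub>R v) - s * (G x \<bullet> v) - \<nu> / 2 * s^2 * qf H v" for s
  \<comment> \<open>\<open>\<phi>' \<le> 0\<close>: Young's inequality with constant \<open>\<nu> s\<close> turns the dual-norm Lipschitz bound
    into \<open>\<langle>G p - G x, v\<rangle> \<le> \<nu> s \<parallel>v\<parallel>\<^sub>H\<^sup>2\<close>.\<close>
  have "\<phi> 1 \<le> \<phi> 0"
  proof (rule DERIV_nonpos_imp_nonincreasing[of 0 1 \<phi>])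
    fix s :: real assume s: "0 \<le> s" "s \<le> 1"
    define p where "p = x + s *\<^sub>R v"
    have pX: "p \<in> X" unfolding p_def v_def
      using convexD[OF X x y, of "1 - s" s] s by (simp add: algebra_simps)
    have "((\<lambda>t. F (x + t *\<^sub>R v)) has_real_derivative (v \<bullet> G p)) (at s)"
      using has_real_derivative_along_line d[OF pX] p_def by simp
    then have D: "(\<phi> has_real_derivative (v \<bullet> G p - G x \<bullet> v - \<nu> / 2 * (2 * s) * qf H v)) (at s)"
      unfolding \<phi>_def by (auto intro!: derivative_eq_intros)
    have "v \<bullet> G p - G x \<bullet> v \<le> \<nu> * s * qf H v"
    proof (cases "s = 0")
      case True then show ?thesis by (simp add: p_def inner_commute)
    next
      case False
      then have sp: "s > 0" using s by simp
      have "(G p - G x) \<bullet> v \<le> qf (matrix_inv H) (G p - G x) / (2 * (\<nu> * s)) + \<nu> * s / 2 * qf H v"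
        using sp nu by (intro inner_le_qf_matrix_inv_qf[OF H]) simp
      also have "qf (matrix_inv H) (G p - G x) / (2 * (\<nu> * s)) \<le> \<nu>^2 * (s^2 * qf H v) / (2 * (\<nu> * s))"
        using L[OF pX x] sp nu by (intro divide_right_mono) (auto simp: p_def qf_scaleR)
      also have "\<nu>^2 * (s^2 * qf H v) / (2 * (\<nu> * s)) = \<nu> * s / 2 * qf H v"
        using sp nu by (simp add: field_simps power2_eq_square)
      finally show ?thesis by (simp add: inner_diff_left inner_diff_right inner_commute mult.assoc)
    qed
    then show "\<exists>y. (\<phi> has_real_derivative y) (at s) \<and> y \<le> 0"
      using D by (intro exI) auto
  qed simp
  then show ?thesis by (simp add: \<phi>_def v_def)
qed

lemma gavg_inner: "gavg N g x \<bullet> w = (\<Sum>j=1..N. g j x \<bullet> w) / real N"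
  unfolding gavg_def by (simp add: inner_sum_left)

lemma favg_gradient_ineq:
  assumes N: "N \<ge> 1" and cv: "\<And>j. j \<in> {1..N} \<Longrightarrow> convex_on X (f j)"
    and d: "\<And>j. j \<in> {1..N} \<Longrightarrow> (f j has_derivative (\<lambda>v. v \<bullet> g j p)) (at p)"
    and pq: "p \<in> X" "q \<in> X"
  shows "favg N f p + gavg N g p \<bullet> (q - p) \<le> favg N f q"
proof -
  have "(\<Sum>j=1..N. f j p + g j p \<bullet> (q - p)) \<le> (\<Sum>j=1..N. f j q)"
    by (intro sum_mono convex_on_gradient_ineq[OF cv pq d])
  then show ?thesis using N unfolding favg_def gavg_inner
    by (simp add: sum.distrib divide_right_mono add_divide_distrib[symmetric])
qed

lemma favg_descent:
  fixes f :: "nat \<Rightarrow> real^'n \<Rightarrow> real"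
  assumes N: "N \<ge> 1" and X: "convex X" and H: "sym_pd H" and nu: "\<nu> > 0"
    and d: "\<And>j p. j \<in> {1..N} \<Longrightarrow> p \<in> X \<Longrightarrow> (f j has_derivative (\<lambda>v. v \<bullet> g j p)) (at p)"
    and L: "\<And>j p q. j \<in> {1..N} \<Longrightarrow> p \<in> X \<Longrightarrow> q \<in> X \<Longrightarrow>
      qf (matrix_inv H) (g j p - g j q) \<le> \<nu>^2 * qf H (p - q)"
    and pq: "p \<in> X" "q \<in> X"
  shows "favg N f q \<le> favg N f p + gavg N g p \<bullet> (q - p) + \<nu> / 2 * qf H (q - p)"
proof -
  have "(\<Sum>j=1..N. f j q) \<le> (\<Sum>j=1..N. f j p + g j p \<bullet> (q - p) + \<nu> / 2 * qf H (q - p))"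
    by (intro sum_mono descent_lemma[OF X pq H nu d L])
  then have "(\<Sum>j=1..N. f j q)
      \<le> (\<Sum>j=1..N. f j p) + (\<Sum>j=1..N. g j p \<bullet> (q - p)) + real N * (\<nu> / 2 * qf H (q - p))"
    by (simp add: sum.distrib)
  then show ?thesis using N unfolding favg_def gavg_inner
    by (simp add: divide_right_mono add_divide_distrib[symmetric] field_simps)
qed

lemma nonneg_if_quadratic_nonneg_near_0:
  fixes D K :: real
  assumes "\<And>\<theta>. 0 < \<theta> \<Longrightarrow> \<theta> \<le> 1 \<Longrightarrow> 0 \<le> \<theta> * D + \<theta>^2 / 2 * K"
  shows "0 \<le> D"
proof (rule ccontr)
  assume "\<not> 0 \<le> D"
  define \<theta> where "\<theta> = min 1 (- D / (\<bar>K\<bar> + 1))"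
  have K1: "0 < \<bar>K\<bar> + 1" by simp
  have "0 < - D / (\<bar>K\<bar> + 1)" using \<open>\<not> 0 \<le> D\<close> by (intro divide_pos_pos) auto
  then have \<theta>: "0 < \<theta>" "\<theta> \<le> 1" "\<theta> * (\<bar>K\<bar> + 1) \<le> - D"
    using pos_le_divide_eq[OF K1, of \<theta> "- D"] by (auto simp: \<theta>_def)
  have "\<theta> * K \<le> \<theta> * \<bar>K\<bar>" using \<theta> by (intro mult_left_mono) auto
  moreover have "\<theta> * \<bar>K\<bar> + \<theta> \<le> - D" using \<theta>(3) by (simp add: distrib_left)
  ultimately have "D + \<theta> * K / 2 < 0" using \<theta> \<open>\<not> 0 \<le> D\<close> by linarith
  then have "\<theta> * (D + \<theta> * K / 2) < 0" using \<theta> by (simp add: mult_pos_neg)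
  then have "\<theta> * D + \<theta>^2 / 2 * K < 0" by (simp add: algebra_simps power2_eq_square)
  then show False using assms[OF \<theta>(1,2)] by simp
qed

lemma is_arg_min_three_point:
  fixes c a b p z :: "real^'n"
  assumes X: "convex X" and sH: "transpose H = H" and sM: "transpose M = M"
    and am: "is_arg_min (\<lambda>z. c \<bullet> z + \<alpha> / 2 * qf H (z - a) + 1/2 * qf M (z - b)) (\<lambda>z. z \<in> X) p"
    and z: "z \<in> X"
  shows "c \<bullet> p + \<alpha> / 2 * qf H (p - a) + 1/2 * qf M (p - b) + \<alpha> / 2 * qf H (z - p) + 1/2 * qf M (z - p)
         \<le> c \<bullet> z + \<alpha> / 2 * qf H (z - a) + 1/2 * qf M (z - b)"
proof -
  define \<psi> where "\<psi> z = c \<bullet> z + \<alpha> / 2 * qf H (z - a) + 1/2 * qf M (z - b)" for z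
  define v where "v = z - p"
  define D where "D = c \<bullet> v + \<alpha> * ((p - a) \<bullet> (H *v v)) + (p - b) \<bullet> (M *v v)"
  define K where "K = \<alpha> * qf H v + qf M v"
  have expand: "\<psi> (p + \<theta> *\<^sub>R v) = \<psi> p + \<theta> * D + \<theta>^2 / 2 * K" for \<theta>
  proof -
    have shift: "p + \<theta> *\<^sub>R v - a = (p - a) + \<theta> *\<^sub>R v" "p + \<theta> *\<^sub>R v - b = (p - b) + \<theta> *\<^sub>R v"
      by simp_all
    show ?thesis unfolding \<psi>_def D_def K_def shift qf_add[OF sH] qf_add[OF sM] qf_scaleR
      by (simp add: matrix_vector_mult_scaleR inner_add_right algebra_simps power2_eq_square)
  qed
  have pX: "p \<in> X" and p_min: "\<And>y. y \<in> X \<Longrightarrow> \<psi> p \<le> \<psi> y"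
    using am unfolding is_arg_min_def \<psi>_def by (auto simp: not_less)
  \<comment> \<open>On the segment from \<open>p\<close> to \<open>z\<close> the objective is a quadratic in \<open>\<theta>\<close> minimised at \<open>\<theta> = 0\<close>.\<close>
  have "0 \<le> D"
  proof (rule nonneg_if_quadratic_nonneg_near_0)
    fix \<theta> :: real assume \<theta>: "0 < \<theta>" "\<theta> \<le> 1"
    have "p + \<theta> *\<^sub>R v = (1 - \<theta>) *\<^sub>R p + \<theta> *\<^sub>R z" by (simp add: v_def algebra_simps)
    then have "p + \<theta> *\<^sub>R v \<in> X" using convexD[OF X pX z, of "1 - \<theta>" \<theta>] \<theta> by simp
    then show "0 \<le> \<theta> * D + \<theta>^2 / 2 * K" using p_min expand by fastforce
  qed
  moreover have "\<psi> z = \<psi> p + D + K / 2" using expand[of 1] by (simp add: v_def)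
  ultimately show ?thesis unfolding \<psi>_def K_def v_def by (simp add: field_simps)
qed

lemma augmented_lagrangian_prox_identity:
  fixes A :: "real^'n^'m" and M :: "real^'n^'n" and b lam l :: "real^'m" and xc xn z :: "real^'n"
  assumes M: "transpose M = M" and \<beta>: "\<beta> \<noteq> 0"
  defines "h \<equiv> - (transpose A *v (lam - \<beta> *\<^sub>R (A *v xc - b)))"
    and "lt \<equiv> lam - \<beta> *\<^sub>R (A *v xn - b)"
  shows "(h \<bullet> xn + 1/2 * qf M (xn - xc)) - (h \<bullet> z + 1/2 * qf M (z - xc)) + 1/2 * qf M (z - xn)
           + ((z - xn) \<bullet> (- (transpose A *v l)) + (l - lt) \<bullet> (A *v z - b))
         = (z - xn) \<bullet> ((M - \<beta> *\<^sub>R (transpose A ** A)) *v (xc - xn)) + 1 / \<beta> * ((l - lt) \<bullet> (lam - lt))"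
proof -
  define u where "u = z - xn"
  define w where "w = xc - xn"
  define lh where "lh = lam - \<beta> *\<^sub>R (A *v xc - b)"
  have prox: "qf M (xn - xc) - qf M (z - xc) + qf M (z - xn) = 2 * (u \<bullet> (M *v w))"
  proof -
    have "xn - xc = - w" "z - xc = u - w" "z - xn = u" by (simp_all add: u_def w_def)
    then show ?thesis using qf_diff[OF M, of u w] qf_uminus[of M w] by simp
  qed
  have lin: "h \<bullet> xn - h \<bullet> z = (A *v u) \<bullet> lh"
    unfolding h_def u_def lh_def
    by (simp add: inner_diff_left inner_diff_right inner_commute inner_vector_matrix
        matrix_vector_mult_diff_distrib algebra_simps)
  have lt_eq: "lt = lh + \<beta> *\<^sub>R (A *v w)"
    by (simp add: lh_def lt_def w_def matrix_vector_mult_diff_distrib algebra_simps)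
  have multiplier: "(A *v u) \<bullet> lh - (A *v u) \<bullet> l + (l - lt) \<bullet> (A *v u) = - \<beta> * ((A *v u) \<bullet> (A *v w))"
    unfolding lt_eq by (simp add: inner_add_left inner_diff_left inner_commute algebra_simps)
  have "(z - xn) \<bullet> (- (transpose A *v l)) = - ((A *v u) \<bullet> l)"
    by (simp add: u_def inner_vector_matrix)
  moreover have "(l - lt) \<bullet> (A *v z - b) = (l - lt) \<bullet> (A *v xn - b) + (l - lt) \<bullet> (A *v u)"
    by (simp add: u_def matrix_vector_mult_diff_distrib inner_diff_right)
  moreover have "(z - xn) \<bullet> ((M - \<beta> *\<^sub>R (transpose A ** A)) *v (xc - xn))
      = u \<bullet> (M *v w) - \<beta> * ((A *v u) \<bullet> (A *v w))"
    unfolding u_def w_def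
    by (simp add: matrix_vector_mult_diff_rdistrib scaleR_matrix_vector_assoc[symmetric]
        matrix_vector_mul_assoc[symmetric] inner_diff_right inner_vector_matrix)
  moreover have "1 / \<beta> * ((l - lt) \<bullet> (lam - lt)) = (l - lt) \<bullet> (A *v xn - b)"
    using \<beta> by (simp add: lt_def)
  ultimately show ?thesis using prox lin multiplier by (simp add: algebra_simps)
qed

text \<open>One call of xsub, with \<open>xs\<close>, \<open>xb\<close>, \<open>xh\<close> the inner iterates \<open>x\<^sub>t\<close>, \<open>x\<^sub>t\<close>-breve and
  \<open>x\<^sub>t\<close>-hat for \<open>t = 1 .. m + 1\<close>. The search directions \<open>d\<^sub>t\<close> are arbitrary: the estimate is
  pathwise.\<close>

locale xsub_run =
  fixes X :: "(real^'n) set" and H M :: "real^'n^'n" and \<eta> :: real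
    and x0 h :: "real^'n" and m :: nat
    and xs xb xh d :: "nat \<Rightarrow> real^'n"
  assumes convex_X: "convex X"
    and start: "xs 1 = x0" "x0 \<in> X" "xb 1 \<in> X"
    and xh_eq: "\<And>t. 1 \<le> t \<Longrightarrow> t \<le> m \<Longrightarrow>
      xh t = (2 / (real t + 1)) *\<^sub>R xb t + (1 - 2 / (real t + 1)) *\<^sub>R xs t"
    and xb_argmin: "\<And>t. 1 \<le> t \<Longrightarrow> t \<le> m \<Longrightarrow>
      is_arg_min (\<lambda>z. (d t + h) \<bullet> z + (2 / (real t * \<eta>)) / 2 * qf H (z - xb t) + 1/2 * qf M (z - x0))
        (\<lambda>z. z \<in> X) (xb (t + 1))"
    and xs_step: "\<And>t. 1 \<le> t \<Longrightarrow> t \<le> m \<Longrightarrow>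
      xs (t + 1) = (2 / (real t + 1)) *\<^sub>R xb (t + 1) + (1 - 2 / (real t + 1)) *\<^sub>R xs t"
begin

lemma xb_in_X:
  assumes "1 \<le> t" "t \<le> m + 1"
  shows "xb t \<in> X"
proof (cases "t = 1")
  case True
  then show ?thesis using start by simp
next
  case False
  then have "xb (t - 1 + 1) \<in> X"
    using assms xb_argmin[of "t - 1"] unfolding is_arg_min_def by auto
  then show ?thesis using False assms by simp
qed

lemma xs_in_X: "1 \<le> t \<Longrightarrow> t \<le> m + 1 \<Longrightarrow> xs t \<in> X"
proof (induction t rule: nat_induct_at_least)
  case base
  then show ?case using start by simp
next
  case (Suc t)
  have "0 \<le> 2 / (real t + 1)" "2 / (real t + 1) \<le> 1" using Suc.hyps by auto
  then have "(2 / (real t + 1)) *\<^sub>R xb (t + 1) + (1 - 2 / (real t + 1)) *\<^sub>R xs t \<in> X"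
    using Suc xb_in_X[of "t + 1"] by (intro convexD[OF convex_X]) auto
  then show ?case using Suc xs_step[of t] by simp
qed

lemma xh_in_X: "1 \<le> t \<Longrightarrow> t \<le> m \<Longrightarrow> xh t \<in> X"
  using xs_in_X[of t] xb_in_X[of t] xh_eq[of t]
  by (auto intro!: convexD[OF convex_X])

end

locale xsub_run_smooth = xsub_run +
  fixes F :: "real^'n \<Rightarrow> real" and G :: "real^'n \<Rightarrow> real^'n" and \<nu> :: real
  assumes H_pd: "sym_pd H" and M_sym: "transpose M = M" and M_psd: "psd M"
    and eta_pos: "0 < \<eta>" and nu_nonneg: "0 \<le> \<nu>" and eta_nu: "\<eta> * \<nu> < 1"
    and gradient_ineq: "\<And>p q. p \<in> X \<Longrightarrow> q \<in> X \<Longrightarrow> F p + G p \<bullet> (q - p) \<le> F q"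
    and descent: "\<And>p q. p \<in> X \<Longrightarrow> q \<in> X \<Longrightarrow> F q \<le> F p + G p \<bullet> (q - p) + \<nu> / 2 * qf H (q - p)"
begin

definition lin_prox :: "real^'n \<Rightarrow> real" where
  "lin_prox y = h \<bullet> y + 1/2 * qf M (y - x0)"

definition prox_gap :: "real^'n \<Rightarrow> real^'n \<Rightarrow> real" where
  "prox_gap z y = lin_prox y - lin_prox z + 1/2 * qf M (z - y)"

definition gap :: "real^'n \<Rightarrow> nat \<Rightarrow> real" where
  "gap z t = F (xs t) - F z + prox_gap z (xs t)"

definition grad_err :: "nat \<Rightarrow> real^'n" where
  "grad_err t = G (xh t) - d t"

definition zeta :: "real^'n \<Rightarrow> real" where
  "zeta z = 2 / (real m * (real m + 1)) *
    (1 / \<eta> * (qf H (z - xb (m + 1)) - qf H (z - xb 1))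
     - (\<Sum>t=1..m. real t * (grad_err t \<bullet> (xb t - z)))
     - \<eta> / (4 * (1 - \<eta> * \<nu>)) * (\<Sum>t=1..m. (real t)^2 * qf (matrix_inv H) (grad_err t)))"

lemma young_grad_err:
  assumes t: "1 \<le> t" and B: "B = 2 / (real t + 1)"
  shows "B * (grad_err t \<bullet> v) \<le> real t * \<eta> / (2 * (real t + 1) * (1 - \<eta> * \<nu>)) * qf (matrix_inv H) (grad_err t)
           + B / (real t * \<eta>) * qf H v - \<nu> / 2 * B^2 * qf H v"
proof -
  define c where "c = 2 / (real t * \<eta>) - \<nu> * B"
  define a where "a = qf (matrix_inv H) (grad_err t)"
  have tpos: "0 < real t" using t by simp
  define r where "r = real t + 1 - \<eta> * \<nu> * real t"
  have "\<eta> * \<nu> * real t \<le> real t"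
    using mult_right_mono[of "\<eta> * \<nu>" 1 "real t"] eta_nu tpos by simp
  then have r_pos: "0 < r" unfolding r_def by linarith
  have c_eq: "c = 2 * r / (real t * \<eta> * (real t + 1))"
    unfolding c_def B r_def using tpos eta_pos by (simp add: field_simps)
  then have c_pos: "0 < c" using r_pos tpos eta_pos by simp
  have "B / (2 * c) = real t * \<eta> / (2 * r)"
  proof -
    define u where "u = real t + 1"
    have "0 < u" using tpos by (simp add: u_def)
    then show ?thesis
      unfolding c_eq B u_def[symmetric] using tpos eta_pos r_pos by (simp add: field_simps)
  qed
  also have "\<dots> \<le> real t * \<eta> / (2 * (real t + 1) * (1 - \<eta> * \<nu>))"
  proof (rule frac_le)
    show "0 < 2 * (real t + 1) * (1 - \<eta> * \<nu>)" using eta_nu tpos by simp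
    show "2 * (real t + 1) * (1 - \<eta> * \<nu>) \<le> 2 * r"
      unfolding r_def using nu_nonneg eta_pos by (simp add: algebra_simps)
  qed (use tpos eta_pos in auto)
  finally have coef: "B / (2 * c) \<le> real t * \<eta> / (2 * (real t + 1) * (1 - \<eta> * \<nu>))" .
  have "grad_err t \<bullet> v \<le> a / (2 * c) + c / 2 * qf H v"
    unfolding a_def using c_pos by (rule inner_le_qf_matrix_inv_qf[OF H_pd])
  then have "B * (grad_err t \<bullet> v) \<le> B * (a / (2 * c) + c / 2 * qf H v)"
    using B by (intro mult_left_mono) auto
  also have "\<dots> = B / (2 * c) * a + B * c / 2 * qf H v"
    using c_pos by (simp add: field_simps)
  also have "B / (2 * c) * a \<le> real t * \<eta> / (2 * (real t + 1) * (1 - \<eta> * \<nu>)) * a"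
    using coef qf_matrix_inv_nonneg[OF H_pd] unfolding a_def by (rule mult_right_mono)
  also have "B * c / 2 * qf H v = B / (real t * \<eta>) * qf H v - \<nu> / 2 * B^2 * qf H v"
    unfolding c_def using tpos eta_pos by (simp add: field_simps power2_eq_square)
  finally show ?thesis unfolding a_def by simp
qed

lemma F_step:
  assumes t: "1 \<le> t" "t \<le> m" and z: "z \<in> X"
  defines "B \<equiv> 2 / (real t + 1)"
  shows "F (xs (t + 1)) - F z \<le> (1 - B) * (F (xs t) - F z) + B * (G (xh t) \<bullet> (xb (t + 1) - z))
      + \<nu> / 2 * B^2 * qf H (xb (t + 1) - xb t)"
proof -
  have B: "0 < B" "B \<le> 1" using t by (auto simp: B_def)
  have xs_next: "xs (t + 1) = B *\<^sub>R xb (t + 1) + (1 - B) *\<^sub>R xs t"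
    using xs_step[OF t] by (simp add: B_def)
  have "xs (t + 1) - xh t = B *\<^sub>R (xb (t + 1) - xb t)"
    unfolding xs_next xh_eq[OF t] B_def[symmetric] by (simp add: algebra_simps)
  then have "F (xs (t + 1)) \<le> F (xh t) + G (xh t) \<bullet> (xs (t + 1) - xh t) + \<nu> / 2 * B^2 * qf H (xb (t + 1) - xb t)"
    using descent[OF xh_in_X[OF t] xs_in_X[of "t + 1"]] t by (simp add: qf_scaleR)
  moreover have "G (xh t) \<bullet> (xs (t + 1) - xh t) = (1 - B) * (G (xh t) \<bullet> (xs t - xh t))
      + B * (G (xh t) \<bullet> (z - xh t)) + B * (G (xh t) \<bullet> (xb (t + 1) - z))"
    unfolding xs_next by (simp add: inner_diff_right inner_add_right algebra_simps)
  moreover have "(1 - B) * (F (xh t) + G (xh t) \<bullet> (xs t - xh t)) \<le> (1 - B) * F (xs t)"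
    using gradient_ineq[OF xh_in_X[OF t] xs_in_X[of t]] t B by (intro mult_left_mono) auto
  moreover have "B * (F (xh t) + G (xh t) \<bullet> (z - xh t)) \<le> B * F z"
    using gradient_ineq[OF xh_in_X[OF t] z] B by (intro mult_left_mono) auto
  ultimately show ?thesis by (simp add: algebra_simps)
qed

lemma prox_gap_step:
  assumes t: "1 \<le> t" "t \<le> m"
  defines "B \<equiv> 2 / (real t + 1)"
  shows "prox_gap z (xs (t + 1)) \<le> (1 - B) * prox_gap z (xs t) + B * prox_gap z (xb (t + 1))"
proof -
  have B: "0 < B" "B \<le> 1" using t by (auto simp: B_def)
  have xs_next: "xs (t + 1) = B *\<^sub>R xb (t + 1) + (1 - B) *\<^sub>R xs t"
    using xs_step[OF t] by (simp add: B_def)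
  have center: "qf M (xs (t + 1) - x0) = (1 - B) * qf M (xs t - x0) + B * qf M (xb (t + 1) - x0)
      - B * (1 - B) * qf M (xb (t + 1) - xs t)"
    using qf_add_scaleR[OF M_sym, of "xs t - x0" B "xb (t + 1) - xs t"]
    unfolding xs_next by (simp add: algebra_simps)
  have target: "qf M (z - xs (t + 1)) = (1 - B) * qf M (z - xs t) + B * qf M (z - xb (t + 1))
      - B * (1 - B) * qf M (xs t - xb (t + 1))"
    using qf_add_scaleR[OF M_sym, of "z - xs t" B "xs t - xb (t + 1)"]
    unfolding xs_next by (simp add: algebra_simps)
  have linear: "h \<bullet> xs (t + 1) = B * (h \<bullet> xb (t + 1)) + (1 - B) * (h \<bullet> xs t)"
    unfolding xs_next by (simp add: inner_add_right)
  have "(1 - B) * prox_gap z (xs t) + B * prox_gap z (xb (t + 1)) - prox_gap z (xs (t + 1))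
      = B * (1 - B) / 2 * (qf M (xb (t + 1) - xs t) + qf M (xs t - xb (t + 1)))"
    unfolding prox_gap_def lin_prox_def center target linear by (simp add: field_simps)
  moreover have "0 \<le> B * (1 - B) / 2 * (qf M (xb (t + 1) - xs t) + qf M (xs t - xb (t + 1)))"
    using B M_psd unfolding psd_def by (intro mult_nonneg_nonneg add_nonneg_nonneg) auto
  ultimately show ?thesis by linarith
qed

lemma three_point_step:
  assumes t: "1 \<le> t" "t \<le> m" and z: "z \<in> X"
  shows "d t \<bullet> (xb (t + 1) - z) + prox_gap z (xb (t + 1))
      \<le> 1 / (real t * \<eta>) * (qf H (z - xb t) - qf H (z - xb (t + 1)) - qf H (xb (t + 1) - xb t))"
  using is_arg_min_three_point[OF convex_X _ M_sym xb_argmin[OF t] z] H_pd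
  unfolding prox_gap_def lin_prox_def sym_pd_def
  by (simp add: inner_add_left inner_diff_right algebra_simps)

lemma gap_step:
  assumes t: "1 \<le> t" "t \<le> m" and z: "z \<in> X"
  defines "B \<equiv> 2 / (real t + 1)"
  shows "gap z (t + 1) \<le> (1 - B) * gap z t
      + B / (real t * \<eta>) * (qf H (z - xb t) - qf H (z - xb (t + 1)))
      + B * (grad_err t \<bullet> (xb t - z))
      + real t * \<eta> / (2 * (real t + 1) * (1 - \<eta> * \<nu>)) * qf (matrix_inv H) (grad_err t)"
proof -
  define Q where "Q = qf H (xb (t + 1) - xb t)"
  have B: "0 < B" "B \<le> 1" using t by (auto simp: B_def)
  have "B * (G (xh t) \<bullet> (xb (t + 1) - z)) + B * prox_gap z (xb (t + 1))
      = B * (d t \<bullet> (xb (t + 1) - z) + prox_gap z (xb (t + 1))) + B * (grad_err t \<bullet> (xb t - z))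
        + B * (grad_err t \<bullet> (xb (t + 1) - xb t))"
    by (simp add: grad_err_def inner_diff_left inner_diff_right algebra_simps)
  moreover have "B * (d t \<bullet> (xb (t + 1) - z) + prox_gap z (xb (t + 1)))
      \<le> B / (real t * \<eta>) * (qf H (z - xb t) - qf H (z - xb (t + 1))) - B / (real t * \<eta>) * Q"
    using mult_left_mono[OF three_point_step[OF t z], of B] B by (simp add: Q_def algebra_simps)
  moreover have "B * (grad_err t \<bullet> (xb (t + 1) - xb t))
      \<le> real t * \<eta> / (2 * (real t + 1) * (1 - \<eta> * \<nu>)) * qf (matrix_inv H) (grad_err t)
        + B / (real t * \<eta>) * Q - \<nu> / 2 * B^2 * Q"
    unfolding Q_def by (rule young_grad_err[OF t(1)]) (simp add: B_def)
  moreover have "(1 - B) * gap z t = (1 - B) * (F (xs t) - F z) + (1 - B) * prox_gap z (xs t)"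
    by (simp add: gap_def distrib_left)
  ultimately show ?thesis
    using F_step[OF t z] prox_gap_step[OF t, of z] unfolding gap_def Q_def B_def by linarith
qed

lemma weighted_gap_step:
  assumes t: "1 \<le> t" "t \<le> m" and z: "z \<in> X"
  shows "real t * (real t + 1) / 2 * gap z (t + 1) \<le> (real t - 1) * real t / 2 * gap z t
      + 1 / \<eta> * (qf H (z - xb t) - qf H (z - xb (t + 1)))
      + real t * (grad_err t \<bullet> (xb t - z))
      + \<eta> / (4 * (1 - \<eta> * \<nu>)) * ((real t)^2 * qf (matrix_inv H) (grad_err t))"
proof -
  define u where "u = real t + 1"
  have pos: "0 < real t" "0 < u" "0 < 1 - \<eta> * \<nu>" using t eta_nu by (auto simp: u_def)
  have "real t * u / 2 * gap z (t + 1) \<le> real t * u / 2 * ((1 - 2 / u) * gap z t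
      + 2 / u / (real t * \<eta>) * (qf H (z - xb t) - qf H (z - xb (t + 1)))
      + 2 / u * (grad_err t \<bullet> (xb t - z))
      + real t * \<eta> / (2 * u * (1 - \<eta> * \<nu>)) * qf (matrix_inv H) (grad_err t))"
    using gap_step[OF t z] pos unfolding u_def by (intro mult_left_mono) auto
  also have "\<dots> = (u - 2) * real t / 2 * gap z t
      + 1 / \<eta> * (qf H (z - xb t) - qf H (z - xb (t + 1)))
      + real t * (grad_err t \<bullet> (xb t - z))
      + \<eta> / (4 * (1 - \<eta> * \<nu>)) * ((real t)^2 * qf (matrix_inv H) (grad_err t))"
    using pos eta_pos by (simp add: field_simps power2_eq_square)
  finally show ?thesis by (simp add: u_def algebra_simps)
qed

lemma weighted_gap_telescope:
  assumes "n \<le> m" and z: "z \<in> X"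
  shows "real n * (real n + 1) / 2 * gap z (n + 1) \<le> 1 / \<eta> * (qf H (z - xb 1) - qf H (z - xb (n + 1)))
      + (\<Sum>t=1..n. real t * (grad_err t \<bullet> (xb t - z)))
      + \<eta> / (4 * (1 - \<eta> * \<nu>)) * (\<Sum>t=1..n. (real t)^2 * qf (matrix_inv H) (grad_err t))"
  using assms(1)
proof (induction n)
  case 0
  then show ?case by simp
next
  case (Suc n)
  have "real (Suc n) * (real (Suc n) + 1) / 2 * gap z (Suc n + 1) \<le> real n * (real n + 1) / 2 * gap z (n + 1)
      + 1 / \<eta> * (qf H (z - xb (Suc n)) - qf H (z - xb (Suc n + 1)))
      + real (Suc n) * (grad_err (Suc n) \<bullet> (xb (Suc n) - z))
      + \<eta> / (4 * (1 - \<eta> * \<nu>)) * ((real (Suc n))^2 * qf (matrix_inv H) (grad_err (Suc n)))"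
    using weighted_gap_step[of "Suc n", OF _ Suc.prems z] by (simp add: algebra_simps)
  then show ?case using Suc by (simp add: distrib_left algebra_simps)
qed

lemma gap_add_zeta_nonpos:
  assumes "1 \<le> m" and "z \<in> X"
  shows "gap z (m + 1) + zeta z \<le> 0"
proof -
  define T where "T = real m * (real m + 1) / 2"
  have T: "0 < T" using assms by (simp add: T_def)
  have "T * (2 / (real m * (real m + 1))) = 1" using assms(1) by (simp add: T_def)
  then have "T * zeta z = - (1 / \<eta> * (qf H (z - xb 1) - qf H (z - xb (m + 1)))
      + (\<Sum>t=1..m. real t * (grad_err t \<bullet> (xb t - z)))
      + \<eta> / (4 * (1 - \<eta> * \<nu>)) * (\<Sum>t=1..m. (real t)^2 * qf (matrix_inv H) (grad_err t)))"
    unfolding zeta_def mult.assoc[symmetric] by (simp add: algebra_simps)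
  then have "T * gap z (m + 1) + T * zeta z \<le> 0"
    using weighted_gap_telescope[OF order_refl assms(2)] unfolding T_def by linarith
  then show ?thesis using T by (simp add: distrib_left[symmetric] mult_le_0_iff)
qed

end

theorem theorem4p2:
  fixes X :: "(real^'n) set"
    and A :: "real^'n^'m" and b :: "real^'m"
    and N :: nat and f :: "nat \<Rightarrow> real^'n \<Rightarrow> real" and g :: "nat \<Rightarrow> real^'n \<Rightarrow> real^'n"
    and U :: "(real^'n) set"
    and H :: "real^'n^'n" and \<nu> :: real and \<beta> :: real and s :: real
    and x xb :: "nat \<Rightarrow> real^'n" and lam :: "nat \<Rightarrow> real^'m"
    and m :: "nat \<Rightarrow> nat" and eta :: "nat \<Rightarrow> real" and M :: "nat \<Rightarrow> real^'n^'n"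
    and xi :: "nat \<Rightarrow> nat \<Rightarrow> nat" and e :: "nat \<Rightarrow> nat \<Rightarrow> real^'n"
    and xin xbin xhat d :: "nat \<Rightarrow> nat \<Rightarrow> real^'n"
    and k :: nat
  assumes X: "X \<noteq> {}" "closed X" "convex X"
    and N: "N \<ge> 1"
    and U: "open U" "X \<subseteq> U"
    and grad: "\<And>j y. j \<in> {1..N} \<Longrightarrow> y \<in> U \<Longrightarrow> GDERIV (f j) y :> g j y"
    and grad_cont: "\<And>j. j \<in> {1..N} \<Longrightarrow> continuous_on U (g j)"
    and fconv: "\<And>j. j \<in> {1..N} \<Longrightarrow> convex_on X (f j)"
    and H: "sym_pd H"
    and nu: "\<nu> > 0"
    and Lip: "\<And>j x1 x2. j \<in> {1..N} \<Longrightarrow> x1 \<in> X \<Longrightarrow> x2 \<in> X \<Longrightarrow>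
               sqrt (qf (matrix_inv H) (g j x1 - g j x2)) \<le> \<nu> * sqrt (qf H (x1 - x2))"
    and beta: "\<beta> > 0"
    and s: "0 < s" "s \<le> 2"
    \<comment> \<open>AS-ALM: initialization\<close>
    and init: "x 0 \<in> X" "xb 0 = x 0"
    \<comment> \<open>AS-ALM: parameter choices in every outer iteration\<close>
    and mk: "\<And>i. m i \<ge> 1"
    and etak: "\<And>i. eta i > 0"
    and Msym: "\<And>i. transpose (M i) = M i"
    and Dk: "\<And>i. psd (M i - \<beta> *\<^sub>R (transpose A ** A))"
    \<comment> \<open>xsub, called with inputs x i, xb i, h^i, m i, eta i, M i\<close>
    and sub_init: "\<And>i. xin i 1 = x i" "\<And>i. xbin i 1 = xb i"
    and sub_xi: "\<And>i t. 1 \<le> t \<Longrightarrow> t \<le> m i \<Longrightarrow> xi i t \<in> {1..N}"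
    and sub_xhat: "\<And>i t. 1 \<le> t \<Longrightarrow> t \<le> m i \<Longrightarrow>
        xhat i t = (2 / (real t + 1)) *\<^sub>R xbin i t + (1 - 2 / (real t + 1)) *\<^sub>R xin i t"
    and sub_d: "\<And>i t. 1 \<le> t \<Longrightarrow> t \<le> m i \<Longrightarrow> d i t = g (xi i t) (xhat i t) + e i t"
    and sub_argmin: "\<And>i t. 1 \<le> t \<Longrightarrow> t \<le> m i \<Longrightarrow>
        is_arg_min (\<lambda>z. (d i t - transpose A *v (lam i - \<beta> *\<^sub>R (A *v x i - b))) \<bullet> z
                        + (2 / (real t * eta i)) / 2 * qf H (z - xbin i t)
                        + 1 / 2 * qf (M i) (z - x i))
                   (\<lambda>z. z \<in> X) (xbin i (t + 1))"
    and sub_x: "\<And>i t. 1 \<le> t \<Longrightarrow> t \<le> m i \<Longrightarrow>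
        xin i (t + 1) = (2 / (real t + 1)) *\<^sub>R xbin i (t + 1) + (1 - 2 / (real t + 1)) *\<^sub>R xin i t"
    and sub_out: "\<And>i. x (Suc i) = xin i (m i + 1)" "\<And>i. xb (Suc i) = xbin i (m i + 1)"
    \<comment> \<open>AS-ALM: multiplier update\<close>
    and lam_upd: "\<And>i. lam (Suc i) = lam i - (s * \<beta>) *\<^sub>R (A *v x (Suc i) - b)"
    \<comment> \<open>the fixed outer index k\<close>
    and eta_k: "eta k < 1 / \<nu>"
  shows "x (Suc k) \<in> X \<and>
    (\<forall>z\<in>X. \<forall>l::real^'m.
      let lt = lam k - \<beta> *\<^sub>R (A *v x (Suc k) - b);
          \<delta> = (\<lambda>t. gavg N g (xhat k t) - d k t);
          \<zeta> = 2 / (real (m k) * (real (m k) + 1)) *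
                ( 1 / eta k * (qf H (z - xb (Suc k)) - qf H (z - xb k))
                  - (\<Sum>t=1..m k. real t * (\<delta> t \<bullet> (xbin k t - z)))
                  - eta k / (4 * (1 - eta k * \<nu>)) *
                      (\<Sum>t=1..m k. (real t)^2 * qf (matrix_inv H) (\<delta> t)))
      in favg N f z - favg N f (x (Suc k))
           + ((z - x (Suc k)) \<bullet> (- (transpose A *v l)) + (l - lt) \<bullet> (A *v z - b))
         \<ge> (z - x (Suc k)) \<bullet> ((M k - \<beta> *\<^sub>R (transpose A ** A)) *v (x k - x (Suc k)))
           + (1 / \<beta>) * ((l - lt) \<bullet> (lam k - lt))
           + \<zeta>)"
proof -
  define h where "h i = - (transpose A *v (lam i - \<beta> *\<^sub>R (A *v x i - b)))" for i
  have run: "xsub_run X H (M i) (eta i) (x i) (h i) (m i) (xin i) (xbin i) (xhat i) (d i)"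
    if "x i \<in> X" "xb i \<in> X" for i
    using that X(3) sub_init sub_xhat sub_argmin sub_x by unfold_locales (auto simp: h_def)
  have feasible: "x i \<in> X \<and> xb i \<in> X" for i
  proof (induction i)
    case 0
    then show ?case using init by simp
  next
    case (Suc i)
    then interpret xsub_run X H "M i" "eta i" "x i" "h i" "m i" "xin i" "xbin i" "xhat i" "d i"
      using run by blast
    show ?case using xs_in_X xb_in_X mk[of i] sub_out[of i] by simp
  qed
  have deriv: "(f j has_derivative (\<lambda>v. v \<bullet> g j p)) (at p)" if "j \<in> {1..N}" "p \<in> X" for j p
    using grad that U(2) unfolding gderiv_def by blast
  have Lip2: "qf (matrix_inv H) (g j p - g j q) \<le> \<nu>^2 * qf H (p - q)"
    if "j \<in> {1..N}" "p \<in> X" "q \<in> X" for j p q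
    using Lip[OF that] qf_matrix_inv_nonneg[OF H] qf_nonneg_if_sym_pd[OF H]
    by (intro le_square_if_sqrt_le_mult_sqrt)
  interpret xsub_run_smooth X H "M k" "eta k" "x k" "h k" "m k" "xin k" "xbin k" "xhat k" "d k"
    "favg N f" "gavg N g" \<nu>
    using beta nu eta_k
    by (intro xsub_run_smooth.intro xsub_run_smooth_axioms.intro run feasible[THEN conjunct1]
        feasible[THEN conjunct2] H Msym psd_if_psd_diff_gram[OF Dk] etak
        favg_gradient_ineq[OF N fconv deriv] favg_descent[OF N X(3) H nu deriv Lip2])
      (auto simp: field_simps)
  show ?thesis
  proof (intro conjI ballI allI, goal_cases)
    case 1
    show ?case using feasible by blast
  next
    case (2 z l)
    show ?case
      using gap_add_zeta_nonpos[OF mk 2] beta augmented_lagrangian_prox_identity[OF Msym[of k],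
          where A = A and b = b and lam = "lam k" and xc = "x k" and xn = "x (Suc k)" and z = z
          and l = l and \<beta> = \<beta>]
      unfolding Let_def gap_def prox_gap_def lin_prox_def zeta_def grad_err_def
      unfolding h_def sub_out sub_init by (simp; linarith)
  qed
qed

end
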